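(* Let $(A,\leq,\cdot,/)$ be a right-residuated magma satisfying condition (N). The following are equivalent: (1) $x/x = y/y$ for all $x,y\in A$; (2) $(x/x)y = y$ for all $x,y\in A$; (3) there exists $e\in A$ with $ey=y$ for all $y\in A$. When these hold, the element $1:=x/x$ (independent of $x$) is a left identity element, and $e\leq 1$ for every left identity element $e$ of $A$ (so $1$ is the maximum left identity).
   Context: Write $xy$ for $x\cdot y$; $\cdot$ binds more strongly than $/$, and $/$ binds more strongly than $\sqcap$, where $x\sqcap y := (x/y)y$. A right-residuated magma is a structure $(A,\leq,\cdot,/)$ where $(A,\leq)$ is a poset and $xy\leq z\iff x\leq z/y$ for all $x,y,z\in A$. Condition (N): for all $x,y\in A$, $x\leq y\iff x = y\sqcap x$. An element $e$ is a left identity if $ey=y$ for all $y$. *)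

theory Defs
  imports Main
begin

definition right_residuated_magma ::
  "('a \<Rightarrow> 'a \<Rightarrow> bool) \<Rightarrow> ('a \<Rightarrow> 'a \<Rightarrow> 'a) \<Rightarrow> ('a \<Rightarrow> 'a \<Rightarrow> 'a) \<Rightarrow> bool" where
  "right_residuated_magma le m d \<longleftrightarrow>
     (\<forall>x. le x x) \<and>
     (\<forall>x y. le x y \<and> le y x \<longrightarrow> x = y) \<and>
     (\<forall>x y z. le x y \<and> le y z \<longrightarrow> le x z) \<and>
     (\<forall>x y z. le (m x y) z \<longleftrightarrow> le x (d z y))"

definition rmeet :: "('a \<Rightarrow> 'a \<Rightarrow> 'a) \<Rightarrow> ('a \<Rightarrow> 'a \<Rightarrow> 'a) \<Rightarrow> 'a \<Rightarrow> 'a \<Rightarrow> 'a" where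
  "rmeet m d x y = m (d x y) y"

definition condN ::
  "('a \<Rightarrow> 'a \<Rightarrow> bool) \<Rightarrow> ('a \<Rightarrow> 'a \<Rightarrow> 'a) \<Rightarrow> ('a \<Rightarrow> 'a \<Rightarrow> 'a) \<Rightarrow> bool" where
  "condN le m d \<longleftrightarrow> (\<forall>x y. le x y \<longleftrightarrow> x = rmeet m d y x)"

definition left_identity :: "('a \<Rightarrow> 'a \<Rightarrow> 'a) \<Rightarrow> 'a \<Rightarrow> bool" where
  "left_identity m e \<longleftrightarrow> (\<forall>y. m e y = y)"

end

theory Submission
  imports Defs
begin

text \<open>Residuation makes multiplication monotone on the left, and with it every product
  \<open>a b\<close> is fixed by the operation \<open>c \<mapsto> (c / b) b\<close>. If \<open>e\<close> is a left identity then
  \<open>e \<le> x / x\<close>, so \<open>y = e y \<le> (x / x) y\<close>; condition (N) turns this inequality into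
  \<open>y = ((x / x) y / y) y\<close>, and the right-hand side is \<open>(x / x) y\<close>. Conversely, if every
  \<open>x / x\<close> is a left identity, then \<open>x / x\<close> and \<open>y / y\<close> lie below each other.\<close>

locale right_residuated =
  fixes le :: "'a \<Rightarrow> 'a \<Rightarrow> bool" (infix \<open>\<sqsubseteq>\<close> 50)
    and m :: "'a \<Rightarrow> 'a \<Rightarrow> 'a" (infixl \<open>\<cdot>\<close> 70)
    and d :: "'a \<Rightarrow> 'a \<Rightarrow> 'a" (infixl \<open>\<oslash>\<close> 70)
  assumes right_residuated_magma: "right_residuated_magma le m d"
begin

lemma le_refl: "x \<sqsubseteq> x"
  using right_residuated_magma unfolding right_residuated_magma_def by blast

lemma le_antisym: "x \<sqsubseteq> y \<Longrightarrow> y \<sqsubseteq> x \<Longrightarrow> x = y"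
  using right_residuated_magma unfolding right_residuated_magma_def by blast

lemma le_trans: "x \<sqsubseteq> y \<Longrightarrow> y \<sqsubseteq> z \<Longrightarrow> x \<sqsubseteq> z"
  using right_residuated_magma unfolding right_residuated_magma_def by blast

lemma mult_le_iff_le_div: "x \<cdot> y \<sqsubseteq> z \<longleftrightarrow> x \<sqsubseteq> z \<oslash> y"
  using right_residuated_magma unfolding right_residuated_magma_def by blast

lemma div_mult_le: "z \<oslash> y \<cdot> y \<sqsubseteq> z"
  using mult_le_iff_le_div le_refl by blast

lemma le_mult_div: "x \<sqsubseteq> x \<cdot> y \<oslash> y"
  using mult_le_iff_le_div le_refl by blast

lemma mult_left_mono: "x \<sqsubseteq> x' \<Longrightarrow> x \<cdot> y \<sqsubseteq> x' \<cdot> y"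
  using le_trans le_mult_div mult_le_iff_le_div by blast

lemma mult_div_mult_cancel: "x \<cdot> y \<oslash> y \<cdot> y = x \<cdot> y"
  using le_antisym div_mult_le mult_left_mono le_mult_div by blast

lemma left_identity_le_div_self:
  assumes "left_identity m e"
  shows "e \<sqsubseteq> x \<oslash> x"
  using assms mult_le_iff_le_div le_refl unfolding left_identity_def by metis

lemma div_self_eq_if_left_identities:
  assumes "\<And>x y. x \<oslash> x \<cdot> y = y"
  shows "x \<oslash> x = y \<oslash> y"
proof (rule le_antisym)
  show "x \<oslash> x \<sqsubseteq> y \<oslash> y" "y \<oslash> y \<sqsubseteq> x \<oslash> x"
    using assms mult_le_iff_le_div le_refl by metis+
qed

end

locale right_residuated_N = right_residuated +
  assumes condN: "condN le m d"
begin

lemma le_iff_eq_rmeet: "x \<sqsubseteq> y \<longleftrightarrow> x = y \<oslash> x \<cdot> x"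
  using condN unfolding condN_def rmeet_def by blast

lemma div_self_mult_self: "x \<oslash> x \<cdot> x = x"
  using le_iff_eq_rmeet le_refl by metis

lemma div_self_left_identity:
  assumes "left_identity m e"
  shows "left_identity m (x \<oslash> x)"
  unfolding left_identity_def
proof
  fix y
  have "e \<cdot> y \<sqsubseteq> x \<oslash> x \<cdot> y"
    using assms left_identity_le_div_self mult_left_mono by blast
  then have "y \<sqsubseteq> x \<oslash> x \<cdot> y"
    using assms unfolding left_identity_def by simp
  then have "y = x \<oslash> x \<cdot> y \<oslash> y \<cdot> y"
    using le_iff_eq_rmeet by blast
  then show "x \<oslash> x \<cdot> y = y"
    using mult_div_mult_cancel by simp
qed

end

theorem mainTheorem7:
  fixes le :: "'a \<Rightarrow> 'a \<Rightarrow> bool" and m d :: "'a \<Rightarrow> 'a \<Rightarrow> 'a"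
  assumes "right_residuated_magma le m d"
    and "condN le m d"
  shows "((\<forall>x y. d x x = d y y) \<longleftrightarrow> (\<forall>x y. m (d x x) y = y))
       \<and> ((\<forall>x y. m (d x x) y = y) \<longleftrightarrow> (\<exists>e. left_identity m e))
       \<and> ((\<forall>x y. d x x = d y y) \<longrightarrow>
            (\<forall>x. left_identity m (d x x)) \<and>
            (\<forall>e x. left_identity m e \<longrightarrow> le e (d x x)))"
proof -
  interpret right_residuated_N le m d
    using assms by unfold_locales
  have units_equal_imp_left_units: "\<forall>x y. m (d x x) y = y" if "\<forall>x y. d x x = d y y"
    using that div_self_mult_self by metis
  have left_units_iff_left_identity: "(\<forall>x y. m (d x x) y = y) \<longleftrightarrow> (\<exists>e. left_identity m e)"
    using div_self_left_identity unfolding left_identity_def by blast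
  show ?thesis
    using units_equal_imp_left_units left_units_iff_left_identity
      div_self_eq_if_left_identities left_identity_le_div_self
    unfolding left_identity_def by blast
qed

end
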